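(* Let $d \ge 1$ be an integer and $p$ a prime number. Choose the coefficient vector $(a_0, a_1, \ldots, a_d)$ uniformly at random in $(\mathbb{Z}/p\mathbb{Z})^{d+1}$ (each of the $p^{d+1}$ vectors with probability $p^{-(d+1)}$), and let $P(x) = a_0x^d + a_1x^{d-1} + \cdots + a_{d-1}x + a_d$. Then the probability that $p$ is not a periodic prime divisor of $P$, i.e. that $P(m) \not\equiv 0 \pmod p$ for every $m \in \mathbb{Z}$, equals $$D_d(p) = \left(1-\frac1p\right)\sum_{k=0}^{\min(d,p-1)} (-1)^k \binom{p-1}{k} p^{-k}.$$ In particular, if $p \le d+1$, then $D_d(p) = \left(1-\frac1p\right)^p$.
   Context: A prime $p$ is called a periodic prime divisor (d.p.p.) of an integer-valued polynomial $P$ if for every $m \in \mathbb{Z}$, $p$ divides at least one of $P(m), P(m+1), \ldots, P(m+p-1)$; for a polynomial with integer coefficients this holds if and only if there exists $m \in \mathbb{Z}$ with $p \mid P(m)$. The polynomials considered have integer coefficients and the random model is the uniform distribution of the coefficients modulo $p$ (leading coefficient allowed to be $0$ mod $p$). *)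

theory Defs
  imports "HOL-Probability.Probability"
begin

definition polyval :: "nat \<Rightarrow> (nat \<Rightarrow> int) \<Rightarrow> int \<Rightarrow> int" where
  "polyval d a x = (\<Sum>i=0..d. a i * x ^ (d - i))"

definition dpp :: "nat \<Rightarrow> (int \<Rightarrow> int) \<Rightarrow> bool" where
  "dpp p P \<longleftrightarrow> (\<forall>m::int. \<exists>j<p. int p dvd P (m + int j))"

text \<open>Coefficient vectors, representing (Z/pZ)^(d+1) by residues 0..p-1.\<close>
definition coeff_vectors :: "nat \<Rightarrow> nat \<Rightarrow> (nat \<Rightarrow> int) set" where
  "coeff_vectors d p = PiE {0..d} (\<lambda>_. {0..<int p})"

definition D :: "nat \<Rightarrow> nat \<Rightarrow> real" where
  "D d p = (1 - 1 / real p) *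
     (\<Sum>k=0..min d (p - 1). (-1) ^ k * real ((p - 1) choose k) * (1 / real p) ^ k)"

end

(* p is not a periodic prime divisor of P iff P has no root among the residues 0, ..., p - 1.
   Reversing the coefficient vector, count the vectors of length n = d + 1 with entries in
   {0..<p} whose polynomial has no such root by inclusion-exclusion over the set B of residues
   prescribed as roots: multiplication by x - s, reduced mod p, is a bijection from the vectors
   of length m vanishing on B onto those of length m + 1 vanishing on B \<union> {s}, so exactly
   p^(n - |B|) vectors vanish on B.  This gives \<Sum>k (-1)^k (p choose k) p^(n - k) vectors, and
   Pascal's rule turns that alternating sum into p^n D d p. *)
theory Submission
  imports Defs "HOL-Number_Theory.Cong"
begin

lemma card_Diff_UN_inclusion_exclusion:
  fixes X :: "'i \<Rightarrow> 'a set"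
  assumes "finite U" "finite A" "\<And>a. a \<in> A \<Longrightarrow> X a \<subseteq> U"
  shows "(of_nat (card (U - \<Union>(X ` A))) :: 'b::ring_1)
       = (\<Sum>B\<in>Pow A. (-1) ^ card B * of_nat (card (U \<inter> \<Inter>(X ` B))))"
proof -
  interpret Incl_Excl finite "of_nat \<circ> card :: 'a set \<Rightarrow> 'b"
    by unfold_locales (auto simp: card_Un_disjnt)
  have fin: "finite (X a)" if "a \<in> A" for a
    using assms(1,3) that finite_subset by blast
  have Pow_split: "Pow A = insert {} {B. B \<subseteq> A \<and> B \<noteq> {}}"
    by auto
  have inter: "U \<inter> \<Inter>(X ` B) = \<Inter>(X ` B)" if "B \<subseteq> A" "B \<noteq> {}" for B
    using that assms(3) by blast
  have "\<Union>(X ` A) \<subseteq> U"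
    using assms(3) by blast
  then have "(of_nat (card (U - \<Union>(X ` A))) :: 'b) = of_nat (card U) - of_nat (card (\<Union>(X ` A)))"
    using assms(1) by (simp add: card_Diff_subset card_mono finite_subset of_nat_diff)
  also have "of_nat (card (\<Union>(X ` A)))
      = (\<Sum>B | B \<subseteq> A \<and> B \<noteq> {}. (- 1) ^ (card B + 1) * of_nat (card (\<Inter>(X ` B))) :: 'b)"
    using restricted_indexed[of A X] assms(2) fin by simp
  also have "\<dots> = - (\<Sum>B | B \<subseteq> A \<and> B \<noteq> {}. (- 1) ^ card B * of_nat (card (U \<inter> \<Inter>(X ` B))))"
    by (simp add: sum_negf[symmetric]) (intro sum.cong; simp add: inter)
  finally show ?thesis
    using assms(2) by (simp add: Pow_split)
qed

lemma sum_Pow_card: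
  assumes "finite A"
  shows "(\<Sum>B\<in>Pow A. f (card B)) = (\<Sum>k=0..card A. of_nat (card A choose k) * f k)"
proof -
  have "(\<Sum>B\<in>Pow A. f (card B)) = (\<Sum>k=0..card A. \<Sum>B\<in>{B. B \<in> Pow A \<and> card B = k}. f (card B))"
    using assms card_mono by (intro sum.group[symmetric]) auto
  also have "\<dots> = (\<Sum>k=0..card A. of_nat (card A choose k) * f k)"
    using n_subsets[OF assms] by (intro sum.cong) auto
  finally show ?thesis .
qed

lemma alternating_binomial_sum_Suc:
  fixes w :: "nat \<Rightarrow> 'a::comm_ring_1"
  shows "(\<Sum>k=0..Suc N. (-1) ^ k * of_nat (Suc N choose k) * w k)
       = (\<Sum>k=0..N. (-1) ^ k * of_nat (N choose k) * (w k - w (Suc k)))"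
proof -
  have "(\<Sum>k=0..Suc N. (-1) ^ k * of_nat (Suc N choose k) * w k)
      = w 0 + (\<Sum>k=0..N. (-1) ^ Suc k * of_nat (N choose Suc k) * w (Suc k))
            + (\<Sum>k=0..N. (-1) ^ Suc k * of_nat (N choose k) * w (Suc k))"
    by (subst sum.atLeast0_atMost_Suc_shift) (simp add: ring_distribs sum.distrib sum_subtractf sum_negf)
  also have "w 0 + (\<Sum>k=0..N. (-1) ^ Suc k * of_nat (N choose Suc k) * w (Suc k))
      = (\<Sum>k=0..N. (-1) ^ k * of_nat (N choose k) * w k)"
    using sum.atLeast0_atMost_Suc_shift[of "\<lambda>k. (-1) ^ k * of_nat (N choose k) * w k" N] by (simp add: binomial_eq_0)
  finally show ?thesis
    by (simp add: right_diff_distrib sum_subtractf sum_negf)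
qed

definition residue_vectors :: "nat \<Rightarrow> nat \<Rightarrow> (nat \<Rightarrow> int) set" where
  "residue_vectors p n = PiE {..<n} (\<lambda>_. {0..<int p})"

definition eval_coeffs :: "nat \<Rightarrow> (nat \<Rightarrow> int) \<Rightarrow> int \<Rightarrow> int" where
  "eval_coeffs n c x = (\<Sum>i<n. c i * x ^ i)"

definition vanishing_vectors :: "nat \<Rightarrow> nat \<Rightarrow> int set \<Rightarrow> (nat \<Rightarrow> int) set" where
  "vanishing_vectors p n S = {c \<in> residue_vectors p n. \<forall>t\<in>S. int p dvd eval_coeffs n c t}"

definition root_free_vectors :: "nat \<Rightarrow> nat \<Rightarrow> (nat \<Rightarrow> int) set" where
  "root_free_vectors p n = {c \<in> residue_vectors p n. \<forall>t\<in>{0..<int p}. \<not> int p dvd eval_coeffs n c t}"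

lemma residue_vectors_range: "c \<in> residue_vectors p n \<Longrightarrow> i < n \<Longrightarrow> c i \<in> {0..<int p}"
  unfolding residue_vectors_def by (erule PiE_mem) simp

lemma residue_vectors_undefined: "c \<in> residue_vectors p n \<Longrightarrow> n \<le> i \<Longrightarrow> c i = undefined"
  unfolding residue_vectors_def by (erule PiE_arb) simp

(* The coefficients of (x - s) b(x), reduced mod p, for b of length m. *)
definition times_linear :: "nat \<Rightarrow> nat \<Rightarrow> int \<Rightarrow> (nat \<Rightarrow> int) \<Rightarrow> nat \<Rightarrow> int" where
  "times_linear p m s b = restrict
     (\<lambda>i. ((if i = 0 then 0 else b (i - 1)) - s * (if i < m then b i else 0)) mod int p) {..m}"

lemma times_linear_in_residue_vectors:
  "p > 0 \<Longrightarrow> times_linear p m s b \<in> residue_vectors p (Suc m)"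
  by (auto simp: times_linear_def residue_vectors_def lessThan_Suc_atMost)

lemma eval_times_linear_cong:
  "[eval_coeffs (Suc m) (times_linear p m s b) x = (x - s) * eval_coeffs m b x] (mod int p)"
proof -
  define u where "u i = (if i = 0 then 0 else b (i - 1)) - s * (if i < m then b i else 0)" for i
  have shifted: "(\<Sum>i<Suc m. (if i = 0 then 0 else b (i - 1)) * x ^ i) = x * eval_coeffs m b x"
    by (subst sum.lessThan_Suc_shift) (simp add: eval_coeffs_def sum_distrib_left algebra_simps)
  have "(\<Sum>i<Suc m. (if i < m then b i else 0) * x ^ i) = eval_coeffs m b x"
    by (simp add: eval_coeffs_def)
  with shifted have exact: "(\<Sum>i<Suc m. u i * x ^ i) = (x - s) * eval_coeffs m b x"
    by (simp add: u_def algebra_simps sum_subtractf sum_distrib_left[symmetric])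
  have "[eval_coeffs (Suc m) (times_linear p m s b) x = (\<Sum>i<Suc m. u i * x ^ i)] (mod int p)"
    unfolding eval_coeffs_def
    by (intro cong_sum cong_mult cong_refl) (simp add: times_linear_def u_def cong_def)
  then show ?thesis
    by (simp only: exact)
qed

lemma inj_on_times_linear: "inj_on (times_linear p m s) (residue_vectors p m)"
proof
  fix b1 b2
  assume b: "b1 \<in> residue_vectors p m" "b2 \<in> residue_vectors p m"
    and eq: "times_linear p m s b1 = times_linear p m s b2"
  have "i < m \<longrightarrow> b1 i = b2 i" if "i \<le> m" for i
    using that
  proof (induction rule: inc_induct)
    case (step i)
    define B where "B b = (if Suc i < m then b (Suc i) else 0)" for b :: "nat \<Rightarrow> int"
    have "times_linear p m s b1 (Suc i) = times_linear p m s b2 (Suc i)"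
      using eq by simp
    then have "[b1 i - s * B b1 = b2 i - s * B b2] (mod int p)"
      using step.hyps by (simp add: times_linear_def B_def cong_def)
    moreover have "B b1 = B b2"
      using step.IH by (simp add: B_def)
    ultimately have "[b1 i = b2 i] (mod int p)"
      by (simp add: cong_iff_dvd_diff)
    moreover have "b1 i \<in> {0..<int p}" "b2 i \<in> {0..<int p}"
      using residue_vectors_range b step.hyps by blast+
    ultimately show ?case
      using cong_less_imp_eq_int by auto
  qed simp
  then show "b1 = b2"
    using b by (intro ext) (metis not_le less_imp_le_nat residue_vectors_undefined)
qed

lemma times_linear_surj:
  assumes p: "p > 0" and c: "c \<in> residue_vectors p (Suc m)"
    and root: "[eval_coeffs (Suc m) c s = 0] (mod int p)"
  obtains b where "b \<in> residue_vectors p m" "times_linear p m s b = c"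
proof
  \<comment> \<open>Synthetic division: the R i are the Horner tails of c at s.\<close>
  define R where "R i = (\<Sum>j=i..m. c j * s ^ (j - i))" for i
  define b where "b = restrict (\<lambda>i. R (Suc i) mod int p) {..<m}"
  have R_step: "R i = c i + s * R (Suc i)" if "i \<le> m" for i
  proof -
    have "(\<Sum>j=Suc i..m. c j * s ^ (j - i)) = s * R (Suc i)"
      unfolding R_def sum_distrib_left
      by (intro sum.cong refl) (simp add: Suc_diff_Suc Suc_le_eq flip: power_Suc)
    then show ?thesis
      using that by (simp add: R_def sum.atLeast_Suc_atMost)
  qed
  have R_0: "R 0 = eval_coeffs (Suc m) c s"
    by (simp add: R_def eval_coeffs_def atLeast0AtMost lessThan_Suc_atMost)
  show "b \<in> residue_vectors p m"
    using p by (auto simp: b_def residue_vectors_def)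
  show "times_linear p m s b = c"
  proof
    fix i
    show "times_linear p m s b i = c i"
    proof (cases "i \<le> m")
      case True
      have "[(if i = 0 then 0 else b (i - 1)) - s * (if i < m then b i else 0)
             = (if i = 0 then 0 else R i) - s * R (Suc i)] (mod int p)"
        using True by (intro cong_diff cong_mult) (auto simp: b_def R_def cong_def)
      also have "[(if i = 0 then 0 else R i) - s * R (Suc i) = c i] (mod int p)"
      proof (cases "i = 0")
        case True
        have "[c 0 - R 0 = c 0 - 0] (mod int p)"
          using R_0 root by (intro cong_diff cong_refl) simp
        then show ?thesis
          using True R_step[of 0] by simp
      qed (use True R_step[of i] in simp)
      finally have "[(if i = 0 then 0 else b (i - 1)) - s * (if i < m then b i else 0) = c i] (mod int p)" .
      moreover have "c i \<in> {0..<int p}"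
        using True c residue_vectors_range by simp
      ultimately show ?thesis
        using True by (simp add: times_linear_def cong_def)
    next
      case False
      then show ?thesis
        using c by (simp add: times_linear_def residue_vectors_undefined)
    qed
  qed
qed

lemma vanishing_vectors_insert:
  assumes "prime p" and "s \<in> {0..<int p}" "S \<subseteq> {0..<int p}" "s \<notin> S"
  shows "vanishing_vectors p (Suc m) (insert s S) = times_linear p m s ` vanishing_vectors p m S"
proof -
  have p: "p > 0"
    using assms(1) prime_gt_0_nat by blast
  have "\<not> int p dvd t - s" if "t \<in> S" for t
    using that assms(2-4) cong_less_imp_eq_int[of t "int p" s] by (auto simp: cong_iff_dvd_diff)
  then have old_roots: "int p dvd eval_coeffs (Suc m) (times_linear p m s b) t
      \<longleftrightarrow> int p dvd eval_coeffs m b t" if "t \<in> S" for t b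
    using that eval_times_linear_cong[of m p s b t] assms(1)
    by (auto simp: cong_dvd_iff prime_dvd_mult_iff)
  have new_root: "int p dvd eval_coeffs (Suc m) (times_linear p m s b) s" for b
    using eval_times_linear_cong[of m p s b s] by (simp add: cong_dvd_iff)
  show ?thesis
  proof (intro equalityI subsetI)
    fix c
    assume "c \<in> vanishing_vectors p (Suc m) (insert s S)"
    then have c: "c \<in> residue_vectors p (Suc m)" "\<forall>t\<in>insert s S. int p dvd eval_coeffs (Suc m) c t"
      by (auto simp: vanishing_vectors_def)
    then have "[eval_coeffs (Suc m) c s = 0] (mod int p)"
      by (simp add: cong_0_iff)
    then obtain b where "b \<in> residue_vectors p m" "times_linear p m s b = c"
      by (rule times_linear_surj[OF p c(1)])
    with c old_roots show "c \<in> times_linear p m s ` vanishing_vectors p m S"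
      by (auto simp: vanishing_vectors_def)
  qed (use old_roots new_root times_linear_in_residue_vectors[OF p] in \<open>auto simp: vanishing_vectors_def\<close>)
qed

(* The truncated subtraction is intended: at least n prescribed roots leave only the zero vector. *)
lemma card_vanishing_vectors:
  assumes "prime p" "finite S" "S \<subseteq> {0..<int p}"
  shows "card (vanishing_vectors p n S) = p ^ (n - card S)"
  using assms(2,3)
proof (induction S arbitrary: n rule: finite_induct)
  case empty
  show ?case
    by (simp add: vanishing_vectors_def residue_vectors_def card_PiE)
next
  case (insert s S)
  show ?case
  proof (cases n)
    case 0
    then have "vanishing_vectors p n (insert s S) = residue_vectors p 0"
      by (auto simp: vanishing_vectors_def eval_coeffs_def)
    then show ?thesis
      using 0 by (simp add: residue_vectors_def)
  next
    case (Suc m)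
    have "card (vanishing_vectors p n (insert s S)) = card (times_linear p m s ` vanishing_vectors p m S)"
      using vanishing_vectors_insert[OF assms(1)] insert Suc by simp
    also have "\<dots> = card (vanishing_vectors p m S)"
      by (intro card_image inj_on_subset[OF inj_on_times_linear]) (auto simp: vanishing_vectors_def)
    finally show ?thesis
      using insert Suc by simp
  qed
qed

lemma card_root_free_vectors:
  assumes "prime p"
  shows "real (card (root_free_vectors p n)) = (\<Sum>k=0..p. (-1) ^ k * real (p choose k) * real p ^ (n - k))"
proof -
  define U where "U = residue_vectors p n"
  define X where "X t = {c \<in> U. int p dvd eval_coeffs n c t}" for t
  have "root_free_vectors p n = U - \<Union>(X ` {0..<int p})"
    by (auto simp: root_free_vectors_def U_def X_def)
  moreover have "U \<inter> \<Inter>(X ` B) = vanishing_vectors p n B" for B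
    by (auto simp: X_def U_def vanishing_vectors_def)
  moreover have "finite U"
    by (simp add: U_def residue_vectors_def finite_PiE)
  ultimately have "real (card (root_free_vectors p n))
      = (\<Sum>B\<in>Pow {0..<int p}. (-1) ^ card B * real (card (vanishing_vectors p n B)))"
    by (simp add: card_Diff_UN_inclusion_exclusion X_def)
  also have "\<dots> = (\<Sum>B\<in>Pow {0..<int p}. (-1) ^ card B * real p ^ (n - card B))"
  proof (intro sum.cong refl)
    fix B
    assume "B \<in> Pow {0..<int p}"
    then show "(-1) ^ card B * real (card (vanishing_vectors p n B)) = (-1) ^ card B * real p ^ (n - card B)"
      using card_vanishing_vectors[OF assms, of B n] finite_subset by auto
  qed
  also have "\<dots> = (\<Sum>k=0..p. (-1) ^ k * real (p choose k) * real p ^ (n - k))"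
    using sum_Pow_card[of "{0..<int p}" "\<lambda>k. (-1) ^ k * real p ^ (n - k)"] by (simp add: mult_ac)
  finally show ?thesis .
qed

lemma alternating_sum_eq_D:
  assumes "p > 0"
  shows "(\<Sum>k=0..p. (-1) ^ k * real (p choose k) * real p ^ (Suc d - k)) / real p ^ Suc d = D d p"
proof -
  define q where "q = 1 / real p"
  \<comment> \<open>Because of the truncated exponent, w is constant from Suc d on; so after Pascal's rule
    only the differences of index at most d survive.\<close>
  define w where "w k = q ^ min k (Suc d)" for k
  obtain N where N: "p = Suc N"
    using assms gr0_implies_Suc by blast
  have "real p ^ (Suc d - k) / real p ^ Suc d = w k" for k
    using assms by (cases "k \<le> Suc d") (simp_all add: w_def q_def power_diff power_one_over)
  then have "(\<Sum>k=0..p. (-1) ^ k * real (p choose k) * real p ^ (Suc d - k)) / real p ^ Suc d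
      = (\<Sum>k=0..p. (-1) ^ k * real (p choose k) * w k)"
    by (simp add: sum_divide_distrib flip: times_divide_eq_right)
  also have "\<dots> = (\<Sum>k=0..N. (-1) ^ k * real (N choose k) * (w k - w (Suc k)))"
    unfolding N by (rule alternating_binomial_sum_Suc)
  also have "\<dots> = (\<Sum>k=0..min d N. (-1) ^ k * real (N choose k) * ((1 - q) * q ^ k))"
  proof -
    have "w k - w (Suc k) = (if k \<le> d then (1 - q) * q ^ k else 0)" for k
      by (auto simp: w_def min_def algebra_simps le_Suc_eq)
    then show ?thesis
      by (intro sum.mono_neutral_cong_right) auto
  qed
  also have "\<dots> = D d p"
    by (simp add: D_def q_def N sum_distrib_left algebra_simps)
  finally show ?thesis .
qed

lemma D_eq_power:
  assumes "0 < p" "p \<le> d + 1"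
  shows "D d p = (1 - 1 / real p) ^ p"
proof -
  obtain N where N: "p = Suc N"
    using assms(1) gr0_implies_Suc by blast
  have "(\<Sum>k=0..N. (-1) ^ k * real (N choose k) * (1 / real p) ^ k) = (1 - 1 / real p) ^ N"
    using binomial_ring[of "- (1 / real p)" 1 N]
    by (simp add: atLeast0AtMost power_minus' algebra_simps power_mult_distrib)
  moreover have "min d (p - 1) = N"
    using assms N by simp
  ultimately show ?thesis
    by (simp add: D_def N)
qed

lemma not_dpp_iff_no_root:
  assumes "p > 0"
  shows "\<not> dpp p (polyval d a) \<longleftrightarrow> (\<forall>t\<in>{0..<int p}. \<not> int p dvd polyval d a t)"
proof
  assume no_root: "\<forall>t\<in>{0..<int p}. \<not> int p dvd polyval d a t"
  show "\<not> dpp p (polyval d a)"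
  proof
    assume "dpp p (polyval d a)"
    then obtain j where "j < p" "int p dvd polyval d a (0 + int j)"
      unfolding dpp_def by blast
    with no_root show False
      by auto
  qed
next
  assume "\<not> dpp p (polyval d a)"
  then obtain m where m: "\<forall>j<p. \<not> int p dvd polyval d a (m + int j)"
    by (auto simp: dpp_def)
  show "\<forall>t\<in>{0..<int p}. \<not> int p dvd polyval d a t"
  proof (intro ballI notI)
    fix t
    assume "int p dvd polyval d a t"
    define j where "j = nat ((t - m) mod int p)"
    have "j < p" "[m + int j = t] (mod int p)"
      using assms by (auto simp: j_def cong_def nat_less_iff mod_add_right_eq)
    moreover have "[polyval d a (m + int j) = polyval d a t] (mod int p)" if "[m + int j = t] (mod int p)"
      unfolding polyval_def by (intro cong_sum cong_mult cong_pow cong_refl that)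
    ultimately show False
      using m \<open>int p dvd polyval d a t\<close> by (auto simp: cong_dvd_iff)
  qed
qed

definition reverse_coeffs :: "nat \<Rightarrow> (nat \<Rightarrow> int) \<Rightarrow> nat \<Rightarrow> int" where
  "reverse_coeffs d a = restrict (\<lambda>i. a (d - i)) {..d}"

lemma eval_reverse_coeffs: "eval_coeffs (Suc d) (reverse_coeffs d a) t = polyval d a t"
proof -
  have "polyval d a t = (\<Sum>i<Suc d. a i * t ^ (d - i))"
    by (simp add: polyval_def atLeast0AtMost lessThan_Suc_atMost)
  also have "\<dots> = (\<Sum>i<Suc d. a (d - i) * t ^ i)"
    by (subst sum.nat_diff_reindex[symmetric]) (intro sum.cong; simp)
  finally show ?thesis
    by (simp add: eval_coeffs_def reverse_coeffs_def lessThan_Suc_atMost)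
qed

lemma reverse_coeffs_involution:
  assumes "a \<in> {..d} \<rightarrow>\<^sub>E S"
  shows "reverse_coeffs d (reverse_coeffs d a) = a"
proof
  fix i
  show "reverse_coeffs d (reverse_coeffs d a) i = a i"
  proof (cases "i \<le> d")
    case True
    then show ?thesis
      by (simp add: reverse_coeffs_def)
  next
    case False
    then show ?thesis
      using PiE_arb[OF assms, of i] by (simp add: reverse_coeffs_def)
  qed
qed

lemma reverse_coeffs_PiE:
  assumes "a \<in> {..d} \<rightarrow>\<^sub>E S"
  shows "reverse_coeffs d a \<in> {..d} \<rightarrow>\<^sub>E S"
  unfolding reverse_coeffs_def restrict_PiE_iff
proof
  fix i
  assume "i \<in> {..d}"
  then show "a (d - i) \<in> S"
    using PiE_mem[OF assms, of "d - i"] by simp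
qed

lemma bij_betw_reverse_coeffs:
  "bij_betw (reverse_coeffs d) (coeff_vectors d p) (residue_vectors p (Suc d))"
proof -
  have "coeff_vectors d p = {..d} \<rightarrow>\<^sub>E {0..<int p}" "residue_vectors p (Suc d) = {..d} \<rightarrow>\<^sub>E {0..<int p}"
    by (simp_all add: coeff_vectors_def residue_vectors_def atLeast0AtMost lessThan_Suc_atMost)
  moreover have "bij_betw (reverse_coeffs d) ({..d} \<rightarrow>\<^sub>E S) ({..d} \<rightarrow>\<^sub>E S)" for S
    by (rule bij_betw_byWitness[where f' = "reverse_coeffs d"])
      (simp_all add: reverse_coeffs_involution image_subset_iff reverse_coeffs_PiE)
  ultimately show ?thesis
    by simp
qed

theorem proposition1:
  fixes d p :: nat
  assumes "d \<ge> 1" and "prime p"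
  shows "measure_pmf.prob (pmf_of_set (coeff_vectors d p))
           {a. \<not> dpp p (polyval d a)} = D d p
         \<and> (p \<le> d + 1 \<longrightarrow> D d p = (1 - 1 / real p) ^ p)"
proof -
  have p: "p > 0"
    using assms(2) prime_gt_0_nat by blast
  define A where "A = coeff_vectors d p"
  have "finite A" and card_A: "card A = p ^ Suc d"
    by (simp_all add: A_def coeff_vectors_def finite_PiE card_PiE)
  then have "A \<noteq> {}"
    using p by auto
  have "bij_betw (reverse_coeffs d) {a \<in> A. \<not> dpp p (polyval d a)} (root_free_vectors p (Suc d))"
    unfolding A_def root_free_vectors_def using bij_betw_reverse_coeffs
    by (rule bij_betw_Collect) (simp add: eval_reverse_coeffs not_dpp_iff_no_root[OF p])
  then have "card (A \<inter> {a. \<not> dpp p (polyval d a)}) = card (root_free_vectors p (Suc d))"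
    by (simp add: Collect_conj_eq Int_commute bij_betw_same_card)
  then have "measure_pmf.prob (pmf_of_set A) {a. \<not> dpp p (polyval d a)}
      = (\<Sum>k=0..p. (-1) ^ k * real (p choose k) * real p ^ (Suc d - k)) / real p ^ Suc d"
    using card_root_free_vectors[OF assms(2), of "Suc d"]
    by (simp add: measure_pmf_of_set[OF \<open>A \<noteq> {}\<close> \<open>finite A\<close>] card_A)
  then show ?thesis
    using alternating_sum_eq_D[OF p] D_eq_power[OF p] by (simp add: A_def)
qed

end
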